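(* Let $\mathcal{C}_1$ and $\mathcal{C}_2$ be any two disjoint maximal commuting classes of two-qubit Pauli operators ($d=4$). Then there exists a third maximal commuting class $\mathcal{C}_3'$ of Pauli operators, disjoint from $\mathcal{C}_1$ and $\mathcal{C}_2$, such that the common eigenbases of $\mathcal{C}_1,\mathcal{C}_2,\mathcal{C}_3'$ form a weakly unextendible set of three mutually unbiased bases in $\mathbb{C}^4$.
   Context: Two-qubit Pauli operators are the tensor products $P_1\otimes P_2$ with $P_k\in\{I,X,Y,Z\}$. A maximal commuting class in $d=4$ is a set of $3$ mutually commuting non-identity two-qubit Pauli operators. Two orthonormal bases of $\mathbb{C}^d$ are mutually unbiased if $|\langle a|b\rangle|=1/\sqrt d$ for all vectors $a$ of the first and $b$ of the second; common eigenbases of pairwise disjoint maximal commuting Pauli classes are mutually unbiased. A set of mutually unbiased bases obtained as common eigenbases of Pauli classes is weakly unextendible if there is no further basis, unbiased to all of them, that is the common eigenbasis of a maximal commuting class of Pauli operators. *)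

theory Defs
  imports Complex_Main "Jordan_Normal_Form.Matrix"
begin

text \<open>Single-qubit Pauli matrices, indexed 0 = I, 1 = X, 2 = Y, 3 = Z
  (entries given for row/column indices 0,1).\<close>
definition pauli1 :: "nat \<Rightarrow> nat \<Rightarrow> nat \<Rightarrow> complex" where
  "pauli1 k r c =
     (if k = 0 then (if r = c then 1 else 0)
      else if k = 1 then (if r \<noteq> c then 1 else 0)
      else if k = 2 then (if r = 0 \<and> c = 1 then - \<i> else if r = 1 \<and> c = 0 then \<i> else 0)
      else (if r = c then (if r = 0 then 1 else -1) else 0))"

text \<open>Two-qubit Pauli operator P_k1 (tensor) P_k2 as a 4x4 complex matrix
  (Kronecker product written out, basis index i = 2*i1 + i2).\<close>
definition pauli2 :: "nat \<Rightarrow> nat \<Rightarrow> complex mat" where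
  "pauli2 k1 k2 = mat 4 4 (\<lambda>(i, j).
      pauli1 k1 (i div 2) (j div 2) * pauli1 k2 (i mod 2) (j mod 2))"

definition nonid_paulis :: "complex mat set" where
  "nonid_paulis = {pauli2 k1 k2 | k1 k2. k1 < 4 \<and> k2 < 4 \<and> (k1, k2) \<noteq> (0, 0)}"

definition max_comm_class :: "complex mat set \<Rightarrow> bool" where
  "max_comm_class C \<longleftrightarrow> C \<subseteq> nonid_paulis \<and> card C = 3 \<and>
     (\<forall>P\<in>C. \<forall>Q\<in>C. P * Q = Q * P)"

definition cinner4 :: "complex vec \<Rightarrow> complex vec \<Rightarrow> complex" where
  "cinner4 v w = (\<Sum>i<4. cnj (v $ i) * w $ i)"

definition orthonormal_basis4 :: "complex vec set \<Rightarrow> bool" where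
  "orthonormal_basis4 B \<longleftrightarrow> B \<subseteq> carrier_vec 4 \<and> card B = 4 \<and>
     (\<forall>v\<in>B. \<forall>w\<in>B. cinner4 v w = (if v = w then 1 else 0))"

definition common_eigenbasis :: "complex mat set \<Rightarrow> complex vec set \<Rightarrow> bool" where
  "common_eigenbasis C B \<longleftrightarrow> orthonormal_basis4 B \<and>
     (\<forall>P\<in>C. \<forall>v\<in>B. \<exists>ev. P *\<^sub>v v = ev \<cdot>\<^sub>v v)"

definition unbiased :: "complex vec set \<Rightarrow> complex vec set \<Rightarrow> bool" where
  "unbiased B1 B2 \<longleftrightarrow> orthonormal_basis4 B1 \<and> orthonormal_basis4 B2 \<and>
     (\<forall>a\<in>B1. \<forall>b\<in>B2. cmod (cinner4 a b) = 1 / sqrt 4)"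

definition weakly_unextendible_pauli_mubs :: "complex mat set list \<Rightarrow> bool" where
  "weakly_unextendible_pauli_mubs Cs \<longleftrightarrow>
     (\<exists>Bs. length Bs = length Cs \<and> (\<forall>i<length Cs. common_eigenbasis (Cs ! i) (Bs ! i))) \<and>
     (\<forall>Bs. length Bs = length Cs \<and> (\<forall>i<length Cs. common_eigenbasis (Cs ! i) (Bs ! i)) \<longrightarrow>
        (\<forall>i<length Cs. \<forall>j<length Cs. i \<noteq> j \<longrightarrow> unbiased (Bs ! i) (Bs ! j)) \<and>
        \<not> (\<exists>C B. max_comm_class C \<and> common_eigenbasis C B \<and>
               (\<forall>i<length Cs. unbiased B (Bs ! i))))"

end

theory Submission
  imports Defs "Jordan_Normal_Form.Determinant"
begin

text \<open>
  Write the two-qubit Pauli operator \<sigma>_a \<otimes> \<sigma>_b as the label (a, b),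
  a, b \<in> {0, 1, 2, 3}. Up to a phase, multiplying operators is taking the componentwise XOR of
  labels, and two operators commute iff they anticommute in an even number of tensor factors.
  Hence every maximal commuting class is {x, y, xy}, there are fifteen of them, and a finite
  check shows that for any two disjoint classes there is a third one, disjoint from both, such
  that every class meets one of the three.

  Common eigenbases of two classes sharing an operator P are never unbiased: P would act on the
  whole second basis with the eigenvalue it has on a vector of the first, hence as a scalar,
  although it is traceless. For disjoint classes C, C' and a common eigenvector b of C, the
  vectors P b with P \<in> {I} \<union> C' form an orthonormal basis; a common eigenvector b' of C'
  has coefficients of modulus |\<langle>b, b'\<rangle>| in it, so Parseval gives |\<langle>b, b'\<rangle>| = 1/2.
\<close>

section \<open>Matrices and the inner product in dimension four\<close>

lemma nat_less_4_iff: "(a::nat) < 4 \<longleftrightarrow> a \<in> {0, 1, 2, 3}"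
  by auto

lemma nat_less_2_iff: "(a::nat) < 2 \<longleftrightarrow> a \<in> {0, 1}"
  by auto

lemma sum_lessThan_4:
  "(\<Sum>k<4. f k) = f 0 + f 1 + f 2 + f 3" for f :: "nat \<Rightarrow> 'a::comm_monoid_add"
  by (simp add: eval_nat_numeral ac_simps)

lemma xor_less_4: "(a::nat) < 4 \<Longrightarrow> b < 4 \<Longrightarrow> xor a b < 4"
  unfolding nat_less_4_iff by (elim insertE emptyE; simp)

lemma xor_eq_0_iff: "xor (a::nat) b = 0 \<longleftrightarrow> a = b"
  by (metis xor.assoc xor.right_neutral xor_self_eq)

lemma xor_left_self: "xor (a::nat) (xor a b) = b"
  by (simp flip: xor.assoc)

definition mat_trace :: "'a::comm_ring_1 mat \<Rightarrow> 'a" where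
  "mat_trace A = (\<Sum>i<dim_row A. A $$ (i, i))"

lemma mat_trace_add:
  "A \<in> carrier_mat n n \<Longrightarrow> B \<in> carrier_mat n n \<Longrightarrow> mat_trace (A + B) = mat_trace A + mat_trace B"
  by (simp add: mat_trace_def sum.distrib)

lemma mat_trace_smult: "A \<in> carrier_mat n n \<Longrightarrow> mat_trace (k \<cdot>\<^sub>m A) = k * mat_trace A"
  by (simp add: mat_trace_def sum_distrib_left)

lemma mat_trace_one: "mat_trace (1\<^sub>m n :: 'a::comm_ring_1 mat) = of_nat n"
  by (simp add: mat_trace_def)

lemma mat_trace_nonzero_diag: "mat_trace A \<noteq> 0 \<Longrightarrow> \<exists>j<dim_row A. A $$ (j, j) \<noteq> 0"
  by (rule ccontr) (simp add: mat_trace_def)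

lemma smult_one_mat: "(1::'a::semiring_1) \<cdot>\<^sub>m A = A"
  by (rule eq_matI) simp_all

lemma smult_mat_mult_vec:
  "A \<in> carrier_mat nr nc \<Longrightarrow> v \<in> carrier_vec nc \<Longrightarrow> (c \<cdot>\<^sub>m A) *\<^sub>v v = c \<cdot>\<^sub>v (A *\<^sub>v v)"
  for A :: "'a::comm_ring mat"
  by (intro eq_vecI) auto

lemma index_mult_mat_4:
  "A \<in> carrier_mat 4 4 \<Longrightarrow> B \<in> carrier_mat 4 4 \<Longrightarrow> i < 4 \<Longrightarrow> j < 4 \<Longrightarrow>
    (A * B) $$ (i, j) = (\<Sum>k<4. A $$ (i, k) * B $$ (k, j))"
  by (auto simp: scalar_prod_def lessThan_atLeast0 intro!: sum.cong)

lemma mult_mat_vec_4: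
  "A \<in> carrier_mat 4 4 \<Longrightarrow> v \<in> carrier_vec 4 \<Longrightarrow> i < 4 \<Longrightarrow>
    (A *\<^sub>v v) $ i = (\<Sum>j<4. A $$ (i, j) * v $ j)"
  by (auto simp: scalar_prod_def lessThan_atLeast0 intro!: sum.cong)

lemma eigenvector_mult:
  assumes "A \<in> carrier_mat n n" "B \<in> carrier_mat n n" "v \<in> carrier_vec n"
    and "A *\<^sub>v v = a \<cdot>\<^sub>v v" "B *\<^sub>v v = b \<cdot>\<^sub>v v"
  shows "(A * B) *\<^sub>v v = (a * b :: 'a::field) \<cdot>\<^sub>v v"
  using assms by (simp add: mult_mat_vec smult_smult_assoc mult.commute)

lemma involution_eigenvalue:
  fixes A :: "'a::field mat"
  assumes "A \<in> carrier_mat n n" "A * A = 1\<^sub>m n" "v \<in> carrier_vec n" "v \<noteq> 0\<^sub>v n"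
    and "A *\<^sub>v v = e \<cdot>\<^sub>v v"
  shows "e = 1 \<or> e = -1"
proof -
  have "v = A *\<^sub>v (A *\<^sub>v v)"
    using assms(1-3) by (simp flip: assoc_mult_mat_vec)
  also have "\<dots> = (e * e) \<cdot>\<^sub>v v"
    using assms(1,3,5) by (simp add: mult_mat_vec smult_smult_assoc)
  finally have v: "v = (e * e) \<cdot>\<^sub>v v" .
  obtain i where i: "i < n" "v $ i \<noteq> 0"
    using assms(3,4) by (metis eq_vecI carrier_vecD index_zero_vec(1,2))
  have "v $ i = (e * e) * v $ i"
    using i assms(3) by (subst v) simp
  with i have "e * e = 1"
    by simp
  then show ?thesis
    by (metis square_eq_1_iff power2_eq_square)
qed

lemma involution_mult_eigenprojector:
  fixes P :: "'a::comm_ring_1 mat"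
  assumes "P \<in> carrier_mat n n" "P * P = 1\<^sub>m n" "s * s = 1"
  shows "P * (1\<^sub>m n + s \<cdot>\<^sub>m P) = s \<cdot>\<^sub>m (1\<^sub>m n + s \<cdot>\<^sub>m P)"
proof -
  have "P * (1\<^sub>m n + s \<cdot>\<^sub>m P) = P + s \<cdot>\<^sub>m 1\<^sub>m n"
    using assms by (simp add: mult_add_distrib_mat[of P n n _ n] mult_smult_distrib[of P n n P n]
        carrier_matD)
  also have "\<dots> = s \<cdot>\<^sub>m (1\<^sub>m n + s \<cdot>\<^sub>m P)"
    using assms by (intro eq_matI) (auto simp: algebra_simps simp flip: mult.assoc)
  finally show ?thesis .
qed

lemma cinner4_smult_right: "w \<in> carrier_vec 4 \<Longrightarrow> cinner4 v (c \<cdot>\<^sub>v w) = c * cinner4 v w"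
  by (simp add: cinner4_def sum_distrib_left mult_ac)

lemma cinner4_smult_left: "v \<in> carrier_vec 4 \<Longrightarrow> cinner4 (c \<cdot>\<^sub>v v) w = cnj c * cinner4 v w"
  by (simp add: cinner4_def sum_distrib_left mult_ac)

lemma cinner4_swap: "cinner4 w v = cnj (cinner4 v w)"
  by (simp add: cinner4_def mult.commute)

lemma cinner4_self: "cinner4 v v = of_real (\<Sum>i<4. (cmod (v $ i))\<^sup>2)"
  unfolding cinner4_def of_real_sum complex_norm_square by (simp add: mult.commute)

lemma cinner4_self_eq_0_iff:
  assumes "v \<in> carrier_vec 4"
  shows "cinner4 v v = 0 \<longleftrightarrow> v = 0\<^sub>v 4"
proof
  assume "cinner4 v v = 0"
  then have "(\<Sum>i<4. (cmod (v $ i))\<^sup>2) = 0"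
    by (simp only: cinner4_self of_real_eq_0_iff)
  then have "\<forall>i<4. v $ i = 0"
    by (simp add: sum_nonneg_eq_0_iff)
  then show "v = 0\<^sub>v 4"
    using assms by (intro eq_vecI) auto
qed (simp add: cinner4_def)

lemma cinner4_normalize:
  assumes "v \<in> carrier_vec 4" "v \<noteq> 0\<^sub>v 4"
  obtains c where "cinner4 (c \<cdot>\<^sub>v v) (c \<cdot>\<^sub>v v) = 1"
proof -
  define r where "r = (\<Sum>i<4. (cmod (v $ i))\<^sup>2)"
  have "cinner4 v v \<noteq> 0"
    using assms cinner4_self_eq_0_iff by blast
  then have "r > 0"
    unfolding r_def by (metis cinner4_self of_real_0 sum_nonneg zero_le_power2 order_neq_le_trans)
  define c where "c = complex_of_real (1 / sqrt r)"
  have "cinner4 (c \<cdot>\<^sub>v v) (c \<cdot>\<^sub>v v) = cnj c * c * cinner4 v v"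
    using assms(1) by (simp add: cinner4_smult_left cinner4_smult_right)
  also have "\<dots> = of_real (1 / sqrt r * (1 / sqrt r) * r)"
    unfolding c_def cinner4_self[of v] r_def[symmetric] by (simp only: of_real_mult complex_cnj_complex_of_real)
  also have "\<dots> = 1"
    using \<open>r > 0\<close> by (simp add: field_simps)
  finally show ?thesis
    using that by blast
qed

definition hermitian4 :: "complex mat \<Rightarrow> bool" where
  "hermitian4 A \<longleftrightarrow> A \<in> carrier_mat 4 4 \<and> (\<forall>i<4. \<forall>j<4. cnj (A $$ (j, i)) = A $$ (i, j))"

lemma hermitian4_cinner4:
  assumes "hermitian4 A" "v \<in> carrier_vec 4" "w \<in> carrier_vec 4"
  shows "cinner4 v (A *\<^sub>v w) = cinner4 (A *\<^sub>v v) w"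
proof -
  have A: "A \<in> carrier_mat 4 4" and adj: "\<And>i j. i < 4 \<Longrightarrow> j < 4 \<Longrightarrow> cnj (A $$ (j, i)) = A $$ (i, j)"
    using assms(1) by (auto simp: hermitian4_def)
  have "cinner4 v (A *\<^sub>v w) = (\<Sum>i<4. \<Sum>j<4. cnj (v $ i) * A $$ (i, j) * w $ j)"
    using A assms by (simp add: cinner4_def mult_mat_vec_4 sum_distrib_left mult.assoc
        del: index_mult_mat_vec)
  also have "\<dots> = (\<Sum>j<4. \<Sum>i<4. cnj (A $$ (j, i) * v $ i) * w $ j)"
    by (subst sum.swap) (auto simp: adj mult_ac intro!: sum.cong)
  also have "\<dots> = cinner4 (A *\<^sub>v v) w"
    using A assms by (simp add: cinner4_def mult_mat_vec_4 sum_distrib_right cnj_sum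
        del: index_mult_mat_vec)
  finally show ?thesis .
qed

lemma hermitian4_eigenvectors_orthogonal:
  assumes "hermitian4 A" "v \<in> carrier_vec 4" "w \<in> carrier_vec 4"
    and "A *\<^sub>v v = a \<cdot>\<^sub>v v" "A *\<^sub>v w = b \<cdot>\<^sub>v w" "cnj a = a" "a \<noteq> b"
  shows "cinner4 v w = 0"
proof -
  have "b * cinner4 v w = a * cinner4 v w"
    using hermitian4_cinner4[OF assms(1-3)] assms(2-6)
    by (simp add: cinner4_smult_right cinner4_smult_left)
  then show ?thesis
    using assms(7) by simp
qed

lemma anticommuting_expectation_eq_0:
  assumes "hermitian4 P" "R \<in> carrier_mat 4 4" "R * P = (-1) \<cdot>\<^sub>m (P * R)"
    and "v \<in> carrier_vec 4" "P *\<^sub>v v = l \<cdot>\<^sub>v v" "cnj l = l" "l \<noteq> 0"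
  shows "cinner4 v (R *\<^sub>v v) = 0"
proof -
  have P: "P \<in> carrier_mat 4 4"
    using assms(1) by (simp add: hermitian4_def)
  have "l * cinner4 v (R *\<^sub>v v) = cinner4 v ((R * P) *\<^sub>v v)"
    using P assms(2,4,5) by (simp add: mult_mat_vec cinner4_smult_right)
  also have "\<dots> = - cinner4 v (P *\<^sub>v (R *\<^sub>v v))"
    unfolding assms(3) using P assms(2,4) smult_mat_mult_vec[of "P * R" 4 4 v "-1"]
    by (simp add: cinner4_smult_right)
  also have "\<dots> = - (l * cinner4 v (R *\<^sub>v v))"
    using assms P by (simp add: hermitian4_cinner4 cinner4_smult_left)
  finally show ?thesis
    using assms(7) by simp
qed

section \<open>Orthonormal families and joint eigenvectors\<close>

definition orthonormal_family4 :: "(nat \<Rightarrow> complex vec) \<Rightarrow> bool" where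
  "orthonormal_family4 f \<longleftrightarrow> (\<forall>k<4. f k \<in> carrier_vec 4) \<and>
     (\<forall>k<4. \<forall>l<4. cinner4 (f k) (f l) = (if k = l then 1 else 0))"

definition family_mat :: "(nat \<Rightarrow> complex vec) \<Rightarrow> complex mat" where
  "family_mat f = mat 4 4 (\<lambda>(i, k). f k $ i)"

definition family_mat_adjoint :: "(nat \<Rightarrow> complex vec) \<Rightarrow> complex mat" where
  "family_mat_adjoint f = mat 4 4 (\<lambda>(k, j). cnj (f k $ j))"

lemma family_mat_mult_adjoint:
  assumes "orthonormal_family4 f"
  shows "family_mat f * family_mat_adjoint f = 1\<^sub>m 4"
proof -
  have carrier: "family_mat_adjoint f \<in> carrier_mat 4 4" "family_mat f \<in> carrier_mat 4 4"
    by (simp_all add: family_mat_def family_mat_adjoint_def)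
  have "family_mat_adjoint f * family_mat f = 1\<^sub>m 4"
  proof (rule eq_matI)
    fix k l assume "k < dim_row (1\<^sub>m 4 :: complex mat)" "l < dim_col (1\<^sub>m 4 :: complex mat)"
    then have kl: "k < 4" "l < 4" by simp_all
    have "(family_mat_adjoint f * family_mat f) $$ (k, l) = cinner4 (f k) (f l)"
      using kl carrier by (simp add: index_mult_mat_4 cinner4_def family_mat_def family_mat_adjoint_def
          del: index_mult_mat)
    then show "(family_mat_adjoint f * family_mat f) $$ (k, l) = 1\<^sub>m 4 $$ (k, l)"
      using assms kl by (simp add: orthonormal_family4_def)
  qed (simp_all add: family_mat_def family_mat_adjoint_def)
  then show ?thesis
    using mat_mult_left_right_inverse[OF carrier] by blast
qed

lemma orthonormal_expansion:
  assumes "orthonormal_family4 f" "w \<in> carrier_vec 4" "i < 4"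
  shows "w $ i = (\<Sum>k<4. cinner4 (f k) w * f k $ i)"
proof -
  have F: "family_mat f \<in> carrier_mat 4 4" "family_mat_adjoint f \<in> carrier_mat 4 4"
    by (simp_all add: family_mat_def family_mat_adjoint_def)
  have "w $ i = ((family_mat f * family_mat_adjoint f) *\<^sub>v w) $ i"
    using assms by (simp add: family_mat_mult_adjoint)
  also have "\<dots> = (\<Sum>j<4. (family_mat f * family_mat_adjoint f) $$ (i, j) * w $ j)"
    using mult_carrier_mat[OF F] assms(2,3)
    by (simp add: mult_mat_vec_4 del: index_mult_mat_vec assoc_mult_mat_vec index_mult_mat)
  also have "\<dots> = (\<Sum>j<4. \<Sum>k<4. f k $ i * cnj (f k $ j) * w $ j)"
    using F assms(3) by (simp add: index_mult_mat_4 family_mat_def family_mat_adjoint_def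
        sum_distrib_right del: index_mult_mat)
  also have "\<dots> = (\<Sum>k<4. cinner4 (f k) w * f k $ i)"
    by (subst sum.swap) (simp add: cinner4_def sum_distrib_left sum_distrib_right mult_ac)
  finally show ?thesis .
qed

lemma parseval:
  assumes "orthonormal_family4 f" "w \<in> carrier_vec 4"
  shows "cinner4 w w = (\<Sum>k<4. cnj (cinner4 (f k) w) * cinner4 (f k) w)"
proof -
  have "cinner4 w w = (\<Sum>i<4. cnj (w $ i) * (\<Sum>k<4. cinner4 (f k) w * f k $ i))"
    unfolding cinner4_def[of w w]
  proof (rule sum.cong[OF refl])
    fix i :: nat assume "i \<in> {..<4}"
    then show "cnj (w $ i) * w $ i = cnj (w $ i) * (\<Sum>k<4. cinner4 (f k) w * f k $ i)"
      using orthonormal_expansion[OF assms, of i] by simp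
  qed
  also have "\<dots> = (\<Sum>i<4. \<Sum>k<4. cinner4 (f k) w * (cnj (w $ i) * f k $ i))"
    by (simp add: sum_distrib_left mult_ac)
  also have "\<dots> = (\<Sum>k<4. cinner4 (f k) w * cinner4 w (f k))"
    by (subst sum.swap) (simp add: cinner4_def[of w] sum_distrib_left)
  also have "\<dots> = (\<Sum>k<4. cnj (cinner4 (f k) w) * cinner4 (f k) w)"
    by (simp add: cinner4_swap[of w] mult.commute)
  finally show ?thesis .
qed

lemma orthonormal_family4_equal_moduli:
  assumes f: "orthonormal_family4 f" and w: "w \<in> carrier_vec 4" "cinner4 w w = 1"
    and r: "\<And>k. k < 4 \<Longrightarrow> cmod (cinner4 (f k) w) = r"
  shows "r = 1 / 2"
proof -
  have "(1::complex) = (\<Sum>k<4. cnj (cinner4 (f k) w) * cinner4 (f k) w)"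
    using parseval[OF f w(1)] w(2) by simp
  also have "\<dots> = (\<Sum>k<4::nat. complex_of_real (r\<^sup>2))"
    using r by (intro sum.cong) (metis complex_norm_square lessThan_iff mult.commute)+
  also have "\<dots> = complex_of_real (4 * r\<^sup>2)"
    by simp
  finally have "4 * r\<^sup>2 = 1"
    by (metis of_real_eq_1_iff)
  then have "r\<^sup>2 = (1 / 2)\<^sup>2"
    by (simp add: power2_eq_square)
  moreover have "r \<ge> 0"
    using r[of 0] by force
  ultimately show ?thesis
    by (simp add: power2_eq_iff_nonneg)
qed

lemma scalar_on_orthonormal_family:
  assumes "orthonormal_family4 f" "A \<in> carrier_mat 4 4" "\<And>k. k < 4 \<Longrightarrow> A *\<^sub>v f k = e \<cdot>\<^sub>v f k"
  shows "A = e \<cdot>\<^sub>m 1\<^sub>m 4"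
proof -
  have F: "family_mat f \<in> carrier_mat 4 4" "family_mat_adjoint f \<in> carrier_mat 4 4"
    by (simp_all add: family_mat_def family_mat_adjoint_def)
  have cols: "col (family_mat f) k = f k" if "k < 4" for k
    using assms(1) that by (intro eq_vecI) (auto simp: family_mat_def orthonormal_family4_def)
  have "A * family_mat f = e \<cdot>\<^sub>m family_mat f"
  proof (rule eq_matI)
    fix i k assume "i < dim_row (e \<cdot>\<^sub>m family_mat f)" "k < dim_col (e \<cdot>\<^sub>m family_mat f)"
    then have ik: "i < 4" "k < 4" using F by auto
    have "(A * family_mat f) $$ (i, k) = (A *\<^sub>v f k) $ i"
      using ik assms(2) F cols by simp
    moreover have "f k \<in> carrier_vec 4"
      using assms(1) ik by (simp add: orthonormal_family4_def)
    ultimately show "(A * family_mat f) $$ (i, k) = (e \<cdot>\<^sub>m family_mat f) $$ (i, k)"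
      using ik assms(3) by (simp add: family_mat_def)
  qed (use assms(2) F in auto)
  then have "A = (e \<cdot>\<^sub>m family_mat f) * family_mat_adjoint f"
    using assms(1,2) F by (metis assoc_mult_mat family_mat_mult_adjoint right_mult_one_mat)
  also have "\<dots> = e \<cdot>\<^sub>m 1\<^sub>m 4"
    using assms(1) F by (simp add: mult_smult_assoc_mat family_mat_mult_adjoint)
  finally show ?thesis .
qed

lemma orthonormal_basis4_enumeration:
  assumes "orthonormal_basis4 B"
  obtains f where "orthonormal_family4 f" "f ` {..<4} = B"
proof -
  have "finite B" "card B = 4"
    using assms by (auto simp: orthonormal_basis4_def intro: card_ge_0_finite)
  then obtain f where f: "bij_betw f {..<4::nat} B"
    by (metis card_lessThan ex_bij_betw_nat_finite lessThan_atLeast0)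
  have "orthonormal_family4 f"
    using assms bij_betwE[OF f] bij_betw_imp_inj_on[OF f]
    by (auto simp: orthonormal_family4_def orthonormal_basis4_def inj_on_eq_iff)
  then show ?thesis
    using that f by (simp add: bij_betw_def)
qed

lemma orthonormal_basis4_image:
  assumes "orthonormal_family4 f"
  shows "orthonormal_basis4 (f ` {..<4})"
proof -
  have f: "f k \<in> carrier_vec 4" "cinner4 (f k) (f l) = (if k = l then 1 else 0)"
    if "k < 4" "l < 4" for k l
    using assms that by (simp_all add: orthonormal_family4_def)
  have inj: "f k = f l \<longleftrightarrow> k = l" if "k < 4" "l < 4" for k l
    using f(2)[OF that] f(2)[OF that(1) that(1)] by (cases "k = l") auto
  then have "inj_on f {..<4}"
    by (simp add: inj_on_def)
  then show ?thesis
    using f inj by (auto simp: orthonormal_basis4_def card_image)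
qed

text \<open>E is four times the projection onto the joint (s, t)-eigenspace of P and Q.\<close>

lemma joint_eigenprojector:
  assumes P: "P \<in> carrier_mat 4 4" "P * P = 1\<^sub>m 4" "mat_trace P = 0"
    and Q: "Q \<in> carrier_mat 4 4" "Q * Q = 1\<^sub>m 4" "mat_trace Q = 0"
    and PQ: "P * Q = Q * P" "mat_trace (P * Q) = 0"
    and st: "s * s = 1" "t * t = 1"
  defines "E \<equiv> (1\<^sub>m 4 + s \<cdot>\<^sub>m P) * (1\<^sub>m 4 + t \<cdot>\<^sub>m Q)"
  shows "P * E = s \<cdot>\<^sub>m E" "Q * E = t \<cdot>\<^sub>m E" "mat_trace E = (4::complex)"
proof -
  define EP where "EP = 1\<^sub>m 4 + s \<cdot>\<^sub>m P"
  define EQ where "EQ = 1\<^sub>m 4 + t \<cdot>\<^sub>m Q"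
  have carrier: "EP \<in> carrier_mat 4 4" "EQ \<in> carrier_mat 4 4"
    using P Q by (simp_all add: EP_def EQ_def)
  have E: "E = EP * EQ"
    by (simp add: E_def EP_def EQ_def)
  show "P * E = s \<cdot>\<^sub>m E"
    using P st carrier unfolding E EP_def
    by (simp add: involution_mult_eigenprojector mult_smult_assoc_mat[of _ 4 4 _ 4]
        flip: assoc_mult_mat[of _ 4 4 _ 4 _ 4])
  have "Q * EP = EP * Q"
    using P Q PQ by (simp add: EP_def mult_add_distrib_mat[of Q 4 4 _ 4]
        add_mult_distrib_mat[of "1\<^sub>m 4" 4 4 _ Q 4] mult_smult_distrib[of Q 4 4 P 4]
        mult_smult_assoc_mat[of P 4 4 Q 4])
  have "Q * E = (Q * EP) * EQ"
    using Q carrier by (simp add: E assoc_mult_mat[of Q 4 4 EP 4 EQ 4])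
  also have "\<dots> = EP * (Q * EQ)"
    using \<open>Q * EP = EP * Q\<close> Q carrier by (simp add: assoc_mult_mat[of EP 4 4 Q 4 EQ 4])
  also have "\<dots> = t \<cdot>\<^sub>m E"
    using Q st carrier unfolding EQ_def E
    by (simp add: involution_mult_eigenprojector mult_smult_distrib[of EP 4 4 _ 4])
  finally show "Q * E = t \<cdot>\<^sub>m E" .
  have "P * EQ = P + t \<cdot>\<^sub>m (P * Q)"
    using P Q unfolding EQ_def
    by (simp add: mult_add_distrib_mat[of P 4 4 "1\<^sub>m 4" 4 "t \<cdot>\<^sub>m Q"] mult_smult_distrib[of P 4 4 Q 4])
  moreover have "E = EQ + s \<cdot>\<^sub>m (P * EQ)"
    using P carrier unfolding E EP_def
    by (simp add: add_mult_distrib_mat[of "1\<^sub>m 4" 4 4 "s \<cdot>\<^sub>m P" EQ 4] mult_smult_assoc_mat[of P 4 4 EQ 4])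
  ultimately show "mat_trace E = (4::complex)"
    using P Q PQ carrier unfolding EQ_def
    by (simp add: mat_trace_add[of _ 4] mat_trace_smult[of _ 4] mat_trace_one)
qed

lemma joint_eigenvector_of_mat:
  assumes E: "E \<in> carrier_mat 4 4" "mat_trace E \<noteq> 0"
    and PQ: "P \<in> carrier_mat 4 4" "P * E = s \<cdot>\<^sub>m E" "Q \<in> carrier_mat 4 4" "Q * E = t \<cdot>\<^sub>m E"
  obtains v where "v \<in> carrier_vec 4" "cinner4 v v = 1" "P *\<^sub>v v = s \<cdot>\<^sub>v v" "Q *\<^sub>v v = t \<cdot>\<^sub>v v"
proof -
  obtain j where j: "j < 4" "E $$ (j, j) \<noteq> 0"
    using mat_trace_nonzero_diag[OF E(2)] E(1) by auto
  define w where "w = col E j"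
  have w: "w \<in> carrier_vec 4" "w \<noteq> 0\<^sub>v 4"
    using E(1) j by (auto simp: w_def carrier_vecI dest!: arg_cong[of _ _ "\<lambda>u. u $ j"])
  have "P *\<^sub>v w = s \<cdot>\<^sub>v w" "Q *\<^sub>v w = t \<cdot>\<^sub>v w"
    using col_mult2[OF PQ(1) E(1) j(1)] col_mult2[OF PQ(3) E(1) j(1)] E(1) j(1)
    by (simp_all add: PQ(2,4) w_def)
  moreover obtain c where "cinner4 (c \<cdot>\<^sub>v w) (c \<cdot>\<^sub>v w) = 1"
    using cinner4_normalize[OF w] .
  ultimately show ?thesis
    using PQ(1,3) w(1) by (intro that[of "c \<cdot>\<^sub>v w"]) (simp_all add: mult_mat_vec smult_smult_assoc mult.commute)
qed

lemma joint_eigenbasis_exists: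
  assumes P: "hermitian4 P" "P * P = 1\<^sub>m 4" "mat_trace P = 0"
    and Q: "hermitian4 Q" "Q * Q = 1\<^sub>m 4" "mat_trace Q = 0"
    and PQ: "P * Q = Q * P" "mat_trace (P * Q) = 0"
  obtains f where "orthonormal_family4 f" "\<And>k. \<exists>s. P *\<^sub>v f k = s \<cdot>\<^sub>v f k" "\<And>k. \<exists>t. Q *\<^sub>v f k = t \<cdot>\<^sub>v f k"
proof -
  have carrier: "P \<in> carrier_mat 4 4" "Q \<in> carrier_mat 4 4"
    using P(1) Q(1) by (simp_all add: hermitian4_def)
  have "\<exists>u. u \<in> carrier_vec 4 \<and> cinner4 u u = 1 \<and> P *\<^sub>v u = s \<cdot>\<^sub>v u \<and> Q *\<^sub>v u = t \<cdot>\<^sub>v u"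
    if "s * s = 1" "t * t = 1" for s t
  proof -
    let ?E = "(1\<^sub>m 4 + s \<cdot>\<^sub>m P) * (1\<^sub>m 4 + t \<cdot>\<^sub>m Q)"
    note E = joint_eigenprojector[OF carrier(1) P(2,3) carrier(2) Q(2,3) PQ that]
    have "1\<^sub>m 4 + s \<cdot>\<^sub>m P \<in> carrier_mat 4 4" "1\<^sub>m 4 + t \<cdot>\<^sub>m Q \<in> carrier_mat 4 4"
      using carrier by simp_all
    then have "?E \<in> carrier_mat 4 4" "mat_trace ?E \<noteq> 0"
      using E(3) by (simp_all add: mult_carrier_mat)
    then show ?thesis
      using joint_eigenvector_of_mat[of ?E P s Q t] carrier E(1,2) by blast
  qed
  then obtain u where u: "\<And>s t. s * s = 1 \<Longrightarrow> t * t = 1 \<Longrightarrow> u s t \<in> carrier_vec 4 \<and>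
      cinner4 (u s t) (u s t) = 1 \<and> P *\<^sub>v u s t = s \<cdot>\<^sub>v u s t \<and> Q *\<^sub>v u s t = t \<cdot>\<^sub>v u s t"
    by metis
  define \<sigma> :: "nat \<Rightarrow> complex" where "\<sigma> k = (if k = 0 then 1 else -1)" for k
  define f where "f k = u (\<sigma> (k div 2)) (\<sigma> (k mod 2))" for k
  have \<sigma>: "\<sigma> k * \<sigma> k = 1" "cnj (\<sigma> k) = \<sigma> k" for k
    by (simp_all add: \<sigma>_def)
  have f: "f k \<in> carrier_vec 4" "cinner4 (f k) (f k) = 1"
    "P *\<^sub>v f k = \<sigma> (k div 2) \<cdot>\<^sub>v f k" "Q *\<^sub>v f k = \<sigma> (k mod 2) \<cdot>\<^sub>v f k" for k
    using u[OF \<sigma>(1) \<sigma>(1)] by (simp_all add: f_def)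
  have "cinner4 (f k) (f l) = 0" if "k < 4" "l < 4" "k \<noteq> l" for k l
  proof -
    have "\<sigma> (k div 2) \<noteq> \<sigma> (l div 2) \<or> \<sigma> (k mod 2) \<noteq> \<sigma> (l mod 2)"
      using that unfolding nat_less_4_iff by (auto simp: \<sigma>_def)
    then show ?thesis
      by (metis hermitian4_eigenvectors_orthogonal P(1) Q(1) f(1,3,4) \<sigma>(2))
  qed
  then have "orthonormal_family4 f"
    by (simp add: orthonormal_family4_def f)
  with f(3,4) show ?thesis
    by (blast intro: that)
qed

section \<open>Pauli operators\<close>

text \<open>
  The labels {0, 1, 2, 3} form the Klein four-group under XOR, and
  \<sigma>_a \<sigma>_b = pauli1_phase a b \<cdot> \<sigma>_(xor a b).
\<close>

definition pauli1_phase :: "nat \<Rightarrow> nat \<Rightarrow> complex" where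
  "pauli1_phase a b =
     (if a = 0 \<or> b = 0 \<or> a = b then 1
      else if (a, b) \<in> {(1, 2), (2, 3), (3, 1)} then \<i> else - \<i>)"

definition pauli1_anticommute :: "nat \<Rightarrow> nat \<Rightarrow> bool" where
  "pauli1_anticommute a b \<longleftrightarrow> a \<noteq> 0 \<and> b \<noteq> 0 \<and> a \<noteq> b"

lemma pauli1_mult:
  assumes "a < 4" "b < 4" "r < 2" "c < 2"
  shows "pauli1 a r 0 * pauli1 b 0 c + pauli1 a r 1 * pauli1 b 1 c =
    pauli1_phase a b * pauli1 (xor a b) r c"
  using assms unfolding nat_less_4_iff nat_less_2_iff by (elim insertE emptyE; simp add: pauli1_def pauli1_phase_def)

lemma pauli1_phase_swap:
  assumes "a < 4" "b < 4"
  shows "pauli1_phase b a = (if pauli1_anticommute a b then - pauli1_phase a b else pauli1_phase a b)"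
  using assms unfolding nat_less_4_iff by (elim insertE emptyE; simp add: pauli1_phase_def pauli1_anticommute_def)

lemma pauli1_adjoint: "k < 4 \<Longrightarrow> r < 2 \<Longrightarrow> c < 2 \<Longrightarrow> cnj (pauli1 k c r) = pauli1 k r c"
  unfolding nat_less_4_iff nat_less_2_iff by (elim insertE emptyE; simp add: pauli1_def)

lemma pauli1_trace: "k < 4 \<Longrightarrow> pauli1 k 0 0 + pauli1 k 1 1 = (if k = 0 then 2 else 0)"
  unfolding nat_less_4_iff by (elim insertE emptyE; simp add: pauli1_def)

lemma pauli1_anticommute_xor:
  "a < 4 \<Longrightarrow> b < 4 \<Longrightarrow> pauli1_anticommute a (xor a b) \<longleftrightarrow> pauli1_anticommute a b"
  unfolding nat_less_4_iff by (elim insertE emptyE; simp add: pauli1_anticommute_def)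

lemma pauli2_carrier [simp]: "pauli2 a b \<in> carrier_mat 4 4"
  by (simp add: pauli2_def)

lemma pauli2_mult:
  assumes "a < 4" "b < 4" "c < 4" "d < 4"
  shows "pauli2 a b * pauli2 c d =
    (pauli1_phase a c * pauli1_phase b d) \<cdot>\<^sub>m pauli2 (xor a c) (xor b d)" (is "_ = ?rhs")
proof (rule eq_matI)
  fix i j assume "i < dim_row (?rhs)" "j < dim_col ?rhs"
  then have ij: "i < 4" "j < 4" by (simp_all add: pauli2_def)
  have "(pauli2 a b * pauli2 c d) $$ (i, j) =
      (\<Sum>k<4. pauli1 a (i div 2) (k div 2) * pauli1 c (k div 2) (j div 2) *
               (pauli1 b (i mod 2) (k mod 2) * pauli1 d (k mod 2) (j mod 2)))"
    using ij by (auto simp: pauli2_def scalar_prod_def lessThan_atLeast0 ac_simps intro!: sum.cong)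
  \<comment> \<open>mixed-product property of the Kronecker product\<close>
  also have "\<dots> =
      (pauli1 a (i div 2) 0 * pauli1 c 0 (j div 2) + pauli1 a (i div 2) 1 * pauli1 c 1 (j div 2)) *
      (pauli1 b (i mod 2) 0 * pauli1 d 0 (j mod 2) + pauli1 b (i mod 2) 1 * pauli1 d 1 (j mod 2))"
    unfolding sum_lessThan_4 by (simp add: algebra_simps)
  also have "\<dots> = ((pauli1_phase a c * pauli1_phase b d) \<cdot>\<^sub>m pauli2 (xor a c) (xor b d)) $$ (i, j)"
    using ij assms pauli1_mult[of a c "i div 2" "j div 2"] pauli1_mult[of b d "i mod 2" "j mod 2"]
    by (simp add: pauli2_def)
  finally show "(pauli2 a b * pauli2 c d) $$ (i, j) = ?rhs $$ (i, j)" .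
qed (simp_all add: pauli2_def)

lemma pauli2_trace:
  assumes "a < 4" "b < 4"
  shows "mat_trace (pauli2 a b) = (if a = 0 \<and> b = 0 then 4 else 0)"
proof -
  have "mat_trace (pauli2 a b) = (pauli1 a 0 0 + pauli1 a 1 1) * (pauli1 b 0 0 + pauli1 b 1 1)"
    by (simp add: mat_trace_def pauli2_def sum_lessThan_4 algebra_simps)
  then show ?thesis
    using pauli1_trace[OF assms(1)] pauli1_trace[OF assms(2)] by simp
qed

lemma pauli2_0_0: "pauli2 0 0 = 1\<^sub>m 4"
  by (rule eq_matI) (auto simp: pauli2_def pauli1_def nat_less_4_iff)

type_synonym pauli_label = "nat \<times> nat"

definition is_label :: "pauli_label \<Rightarrow> bool" where
  "is_label x \<longleftrightarrow> fst x < 4 \<and> snd x < 4"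

definition pauli_op :: "pauli_label \<Rightarrow> complex mat" where
  "pauli_op x = pauli2 (fst x) (snd x)"

definition label_mult :: "pauli_label \<Rightarrow> pauli_label \<Rightarrow> pauli_label" where
  "label_mult x y = (xor (fst x) (fst y), xor (snd x) (snd y))"

definition label_phase :: "pauli_label \<Rightarrow> pauli_label \<Rightarrow> complex" where
  "label_phase x y = pauli1_phase (fst x) (fst y) * pauli1_phase (snd x) (snd y)"

text \<open>Tensor products commute iff their factors anticommute in an even number of positions.\<close>

definition labels_commute :: "pauli_label \<Rightarrow> pauli_label \<Rightarrow> bool" where
  "labels_commute x y \<longleftrightarrow>
     (pauli1_anticommute (fst x) (fst y) \<longleftrightarrow> pauli1_anticommute (snd x) (snd y))"

lemma pauli_op_carrier [simp]: "pauli_op x \<in> carrier_mat 4 4"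
  by (simp add: pauli_op_def)

lemma pauli_op_dim [simp]: "dim_row (pauli_op x) = 4" "dim_col (pauli_op x) = 4"
  by (simp_all add: pauli_op_def pauli2_def)

lemma pauli_op_mult_vec_carrier [simp]: "pauli_op x *\<^sub>v v \<in> carrier_vec 4"
  by (rule carrier_vecI) simp

lemma is_label_mult: "is_label x \<Longrightarrow> is_label y \<Longrightarrow> is_label (label_mult x y)"
  by (simp add: is_label_def label_mult_def xor_less_4)

lemma label_mult_commute: "label_mult x y = label_mult y x"
  by (simp add: label_mult_def xor.commute)

lemma label_mult_left_self: "label_mult x (label_mult x y) = y"
  by (simp add: label_mult_def xor_left_self)

lemma label_mult_eq_0_iff: "label_mult x y = (0, 0) \<longleftrightarrow> x = y"
  by (simp add: label_mult_def xor_eq_0_iff prod_eq_iff)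

lemma label_mult_self [simp]: "label_mult x x = (0, 0)"
  by (simp add: label_mult_def)

lemma label_mult_0_left: "label_mult (0, 0) y = y"
  by (simp add: label_mult_def)

lemma label_mult_0_right: "label_mult x (0, 0) = x"
  by (simp add: label_mult_def)

lemma label_mult_eq_left_iff: "label_mult x y = x \<longleftrightarrow> y = (0, 0)"
  by (metis label_mult_0_left label_mult_commute label_mult_left_self label_mult_self)

lemma label_mult_eq_right_iff: "label_mult x y = y \<longleftrightarrow> x = (0, 0)"
  by (metis label_mult_commute label_mult_eq_left_iff)

lemma labels_commute_sym: "labels_commute y x \<longleftrightarrow> labels_commute x y"
  by (auto simp: labels_commute_def pauli1_anticommute_def)

lemma labels_commute_refl: "labels_commute x x"
  by (simp add: labels_commute_def pauli1_anticommute_def)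

lemma labels_commute_mult_right:
  "is_label x \<Longrightarrow> is_label y \<Longrightarrow> labels_commute x (label_mult x y) \<longleftrightarrow> labels_commute x y"
  by (simp add: labels_commute_def label_mult_def is_label_def pauli1_anticommute_xor)

lemma label_phase_nonzero: "label_phase x y \<noteq> 0"
  by (simp add: label_phase_def pauli1_phase_def)

lemma pauli_op_mult:
  "is_label x \<Longrightarrow> is_label y \<Longrightarrow> pauli_op x * pauli_op y = label_phase x y \<cdot>\<^sub>m pauli_op (label_mult x y)"
  by (simp add: pauli_op_def is_label_def label_phase_def label_mult_def pauli2_mult)

lemma pauli_op_0: "pauli_op (0, 0) = 1\<^sub>m 4"
  by (simp add: pauli_op_def pauli2_0_0)

lemma pauli_op_square: "is_label x \<Longrightarrow> pauli_op x * pauli_op x = 1\<^sub>m 4"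
  by (simp add: pauli_op_mult pauli_op_0 label_phase_def pauli1_phase_def smult_one_mat)

lemma pauli_op_mult_swap:
  assumes "is_label x" "is_label y"
  shows "pauli_op y * pauli_op x =
    (if labels_commute x y then label_phase x y else - label_phase x y) \<cdot>\<^sub>m pauli_op (label_mult x y)"
  using assms pauli1_phase_swap[of "fst x" "fst y"] pauli1_phase_swap[of "snd x" "snd y"]
  by (simp add: pauli_op_mult label_mult_commute label_phase_def is_label_def labels_commute_def)

lemma mat_trace_pauli_op:
  "is_label x \<Longrightarrow> mat_trace (pauli_op x) = (if x = (0, 0) then 4 else 0)"
  by (cases x) (simp add: pauli_op_def is_label_def pauli2_trace)

lemma pauli_op_nonzero_entry:
  assumes "is_label x"
  shows "\<exists>i<4. \<exists>j<4. pauli_op x $$ (i, j) \<noteq> 0"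
proof (rule ccontr)
  assume "\<not> ?thesis"
  then have "(pauli_op x * pauli_op x) $$ (0, 0) = 0"
    by (simp add: index_mult_mat_4 del: index_mult_mat)
  then show False
    using assms by (simp add: pauli_op_square)
qed

lemma pauli_op_commute_iff:
  assumes "is_label x" "is_label y"
  shows "pauli_op x * pauli_op y = pauli_op y * pauli_op x \<longleftrightarrow> labels_commute x y"
proof
  assume commute: "pauli_op x * pauli_op y = pauli_op y * pauli_op x"
  show "labels_commute x y"
  proof (rule ccontr)
    assume "\<not> labels_commute x y"
    obtain i j where ij: "i < 4" "j < 4" "pauli_op (label_mult x y) $$ (i, j) \<noteq> 0"
      using pauli_op_nonzero_entry is_label_mult[OF assms] by blast
    have "label_phase x y \<cdot>\<^sub>m pauli_op (label_mult x y) = - label_phase x y \<cdot>\<^sub>m pauli_op (label_mult x y)"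
      using commute \<open>\<not> labels_commute x y\<close> by (simp add: pauli_op_mult_swap[OF assms] pauli_op_mult[OF assms])
    from arg_cong[OF this, of "\<lambda>M. M $$ (i, j)"] ij show False
      using label_phase_nonzero[of x y] by simp
  qed
qed (simp add: pauli_op_mult_swap[OF assms] pauli_op_mult[OF assms])

lemma pauli_op_anticommute:
  assumes "is_label x" "is_label y" "\<not> labels_commute x y"
  shows "pauli_op y * pauli_op x = (-1) \<cdot>\<^sub>m (pauli_op x * pauli_op y)"
  unfolding pauli_op_mult_swap[OF assms(1,2)] pauli_op_mult[OF assms(1,2)]
  using assms(3) by (intro eq_matI) auto

lemma pauli_op_inj:
  assumes "is_label x" "is_label y" "pauli_op x = pauli_op y"
  shows "x = y"
proof (rule ccontr)
  assume "x \<noteq> y"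
  have "label_phase x y \<cdot>\<^sub>m pauli_op (label_mult x y) = 1\<^sub>m 4"
    using assms pauli_op_square pauli_op_mult by metis
  then have "mat_trace (label_phase x y \<cdot>\<^sub>m pauli_op (label_mult x y)) = 4"
    by (simp add: mat_trace_one)
  then have "label_phase x y * mat_trace (pauli_op (label_mult x y)) = 4"
    by (simp add: mat_trace_smult[of _ 4])
  then show False
    using \<open>x \<noteq> y\<close> assms by (simp add: mat_trace_pauli_op is_label_mult label_mult_eq_0_iff)
qed

lemma hermitian4_pauli_op: "is_label x \<Longrightarrow> hermitian4 (pauli_op x)"
  by (simp add: hermitian4_def pauli_op_def is_label_def pauli2_def pauli1_adjoint)

lemma pauli_expectation_eq_0:
  assumes "is_label p" "is_label r" "\<not> labels_commute p r"
    and "b \<in> carrier_vec 4" "cinner4 b b = 1" "pauli_op p *\<^sub>v b = e \<cdot>\<^sub>v b"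
  shows "cinner4 b (pauli_op r *\<^sub>v b) = 0"
proof -
  have "b \<noteq> 0\<^sub>v 4"
    using assms(5) by (auto simp: cinner4_def)
  then have "e = 1 \<or> e = -1"
    using involution_eigenvalue[OF pauli_op_carrier pauli_op_square[OF assms(1)] assms(4) _ assms(6)]
    by simp
  then show ?thesis
    using anticommuting_expectation_eq_0[OF hermitian4_pauli_op[OF assms(1)] pauli_op_carrier
        pauli_op_anticommute[OF assms(1-3)] assms(4,6)] by auto
qed

section \<open>Maximal commuting classes\<close>

definition nonzero_labels :: "pauli_label list" where
  "nonzero_labels = [(a, b). a \<leftarrow> [0..<4], b \<leftarrow> [0..<4], (a, b) \<noteq> (0, 0)]"

lemma set_nonzero_labels: "x \<in> set nonzero_labels \<longleftrightarrow> is_label x \<and> x \<noteq> (0, 0)"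
  by (cases x) (auto simp: nonzero_labels_def is_label_def)

lemma nonid_paulis_iff: "P \<in> nonid_paulis \<longleftrightarrow> (\<exists>z\<in>set nonzero_labels. P = pauli_op z)"
  by (force simp: nonid_paulis_def set_nonzero_labels is_label_def pauli_op_def)

definition label_class :: "pauli_label \<Rightarrow> pauli_label \<Rightarrow> pauli_label set" where
  "label_class x y = {x, y, label_mult x y}"

definition generates_class :: "pauli_label \<Rightarrow> pauli_label \<Rightarrow> bool" where
  "generates_class x y \<longleftrightarrow>
     x \<in> set nonzero_labels \<and> y \<in> set nonzero_labels \<and> x \<noteq> y \<and> labels_commute x y"

definition pauli_class :: "pauli_label \<Rightarrow> pauli_label \<Rightarrow> complex mat set" where
  "pauli_class x y = pauli_op ` label_class x y"

lemma commuting_labels_closed: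
  "\<forall>x\<in>set nonzero_labels. \<forall>y\<in>set nonzero_labels. \<forall>z\<in>set nonzero_labels.
     x \<noteq> y \<and> x \<noteq> z \<and> y \<noteq> z \<and> labels_commute x y \<and> labels_commute x z \<and> labels_commute y z
     \<longrightarrow> z = label_mult x y"
  by code_simp

lemma generates_class_label_class:
  assumes "generates_class x y" "z \<in> label_class x y"
  shows "is_label z" "z \<noteq> (0, 0)"
proof -
  have "is_label x" "is_label y" "x \<noteq> (0, 0)" "y \<noteq> (0, 0)" "x \<noteq> y"
    using assms(1) by (auto simp: generates_class_def set_nonzero_labels)
  moreover have "label_mult x y \<noteq> (0, 0)"
    using \<open>x \<noteq> y\<close> by (simp add: label_mult_eq_0_iff)
  ultimately show "is_label z" "z \<noteq> (0, 0)"
    using assms(2) by (auto simp: label_class_def is_label_mult)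
qed

lemma generates_class_commute:
  assumes "generates_class x y" "p \<in> label_class x y" "q \<in> label_class x y"
  shows "labels_commute p q"
proof -
  have "is_label x" "is_label y" "labels_commute x y"
    using assms(1) by (auto simp: generates_class_def set_nonzero_labels)
  then have "labels_commute x (label_mult x y)" "labels_commute y (label_mult x y)"
    using labels_commute_mult_right[of y x] by (simp_all add: labels_commute_mult_right label_mult_commute
        labels_commute_sym)
  then show ?thesis
    using assms(2,3) \<open>labels_commute x y\<close>
    by (auto simp: label_class_def labels_commute_refl labels_commute_sym)
qed

lemma pauli_class_max_comm_class:
  assumes "generates_class x y"
  shows "max_comm_class (pauli_class x y)"
proof -
  note labels = generates_class_label_class[OF assms]
  have "pauli_class x y \<subseteq> nonid_paulis"
    using labels by (force simp: pauli_class_def nonid_paulis_def pauli_op_def is_label_def)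
  moreover have "card (pauli_class x y) = 3"
  proof -
    have "inj_on pauli_op (label_class x y)"
      using labels(1) by (meson inj_onI pauli_op_inj)
    moreover have "card (label_class x y) = 3"
    proof -
      have "x \<noteq> y" "label_mult x y \<noteq> x" "label_mult x y \<noteq> y"
        using assms by (auto simp: generates_class_def set_nonzero_labels label_mult_eq_left_iff
            label_mult_eq_right_iff)
      then show ?thesis
        by (simp add: label_class_def card_insert_if)
    qed
    ultimately show ?thesis
      by (simp add: pauli_class_def card_image)
  qed
  moreover have "\<forall>P\<in>pauli_class x y. \<forall>Q\<in>pauli_class x y. P * Q = Q * P"
    using labels generates_class_commute[OF assms] pauli_op_commute_iff by (auto simp: pauli_class_def)
  ultimately show ?thesis
    by (simp add: max_comm_class_def)
qed

lemma max_comm_class_pauli_class: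
  assumes "max_comm_class C"
  obtains x y where "generates_class x y" "C = pauli_class x y"
proof -
  have "card C = 3"
    using assms by (simp add: max_comm_class_def)
  then obtain P Q R where C: "C = {P, Q, R}" "P \<noteq> Q" "P \<noteq> R" "Q \<noteq> R"
    by (auto simp: card_3_iff)
  then obtain x y z where xyz: "x \<in> set nonzero_labels" "y \<in> set nonzero_labels" "z \<in> set nonzero_labels"
    "P = pauli_op x" "Q = pauli_op y" "R = pauli_op z"
    using assms by (auto simp: max_comm_class_def nonid_paulis_iff)
  then have labels: "is_label x" "is_label y" "is_label z"
    by (simp_all add: set_nonzero_labels)
  have distinct: "x \<noteq> y" "x \<noteq> z" "y \<noteq> z"
    using C xyz by auto
  have commute: "labels_commute x y" "labels_commute x z" "labels_commute y z"
    using assms C xyz pauli_op_commute_iff[OF labels(1,2)] pauli_op_commute_iff[OF labels(1,3)]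
      pauli_op_commute_iff[OF labels(2,3)] by (simp_all add: max_comm_class_def)
  have "z = label_mult x y"
    using commuting_labels_closed xyz(1-3) distinct commute by blast
  then show ?thesis
    using that[of x y] xyz distinct commute C
    by (simp add: generates_class_def pauli_class_def label_class_def)
qed

lemma pauli_class_disjoint_iff:
  assumes "generates_class x y" "generates_class u v"
  shows "pauli_class x y \<inter> pauli_class u v = {} \<longleftrightarrow> label_class x y \<inter> label_class u v = {}"
proof
  assume disjoint: "label_class x y \<inter> label_class u v = {}"
  show "pauli_class x y \<inter> pauli_class u v = {}"
  proof (rule ccontr)
    assume "pauli_class x y \<inter> pauli_class u v \<noteq> {}"
    then obtain p q where pq: "p \<in> label_class x y" "q \<in> label_class u v" "pauli_op p = pauli_op q"
      by (auto simp: pauli_class_def)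
    then have "p = q"
      using pauli_op_inj generates_class_label_class(1)[OF assms(1)] generates_class_label_class(1)[OF assms(2)]
      by blast
    with pq disjoint show False
      by blast
  qed
qed (auto simp: pauli_class_def)

lemma common_eigenbasis_exists:
  assumes "generates_class x y"
  shows "\<exists>B. common_eigenbasis (pauli_class x y) B"
proof -
  have xy: "is_label x" "is_label y" "x \<noteq> (0, 0)" "y \<noteq> (0, 0)" "label_mult x y \<noteq> (0, 0)"
    using generates_class_label_class[OF assms] by (auto simp: label_class_def)
  let ?P = "pauli_op x" and ?Q = "pauli_op y" and ?R = "pauli_op (label_mult x y)"
  have PQ: "?P * ?Q = label_phase x y \<cdot>\<^sub>m ?R"
    using xy by (simp add: pauli_op_mult)
  have "?P * ?Q = ?Q * ?P"
    using assms xy pauli_op_commute_iff by (simp add: generates_class_def)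
  moreover have "mat_trace (?P * ?Q) = 0"
    using xy by (simp add: PQ mat_trace_smult[of _ 4] mat_trace_pauli_op is_label_mult)
  ultimately obtain f where f: "orthonormal_family4 f"
    and eigen: "\<And>k. \<exists>s. ?P *\<^sub>v f k = s \<cdot>\<^sub>v f k" "\<And>k. \<exists>t. ?Q *\<^sub>v f k = t \<cdot>\<^sub>v f k"
    using joint_eigenbasis_exists[of ?P ?Q] xy
    by (auto simp: hermitian4_pauli_op pauli_op_square mat_trace_pauli_op)
  have "\<exists>e. M *\<^sub>v f k = e \<cdot>\<^sub>v f k" if "M \<in> pauli_class x y" "k < 4" for M k
  proof -
    obtain s t where st: "?P *\<^sub>v f k = s \<cdot>\<^sub>v f k" "?Q *\<^sub>v f k = t \<cdot>\<^sub>v f k"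
      using eigen by blast
    have "f k \<in> carrier_vec 4"
      using f \<open>k < 4\<close> by (simp add: orthonormal_family4_def)
    then have "label_phase x y \<cdot>\<^sub>v (?R *\<^sub>v f k) = (s * t) \<cdot>\<^sub>v f k"
      using eigenvector_mult[OF pauli_op_carrier pauli_op_carrier _ st] PQ
        smult_mat_mult_vec[of ?R 4 4 "f k"] by simp
    then have "(1 / label_phase x y) \<cdot>\<^sub>v (label_phase x y \<cdot>\<^sub>v (?R *\<^sub>v f k)) =
        (s * t / label_phase x y) \<cdot>\<^sub>v f k"
      by (simp add: smult_smult_assoc)
    then have "?R *\<^sub>v f k = (s * t / label_phase x y) \<cdot>\<^sub>v f k"
      using label_phase_nonzero[of x y] by (simp add: smult_smult_assoc)
    then show ?thesis
      using that(1) st by (auto simp: pauli_class_def label_class_def)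
  qed
  then show ?thesis
    using orthonormal_basis4_image[OF f] unfolding common_eigenbasis_def by blast
qed

text \<open>One generating pair for each of the fifteen maximal commuting classes.\<close>

definition class_generators :: "(pauli_label \<times> pauli_label) list" where
  "class_generators =
     [((0,1),(1,0)), ((0,1),(2,0)), ((0,1),(3,0)), ((0,2),(1,0)), ((0,2),(2,0)), ((0,2),(3,0)),
      ((0,3),(1,0)), ((0,3),(2,0)), ((0,3),(3,0)), ((1,1),(2,2)), ((1,1),(2,3)), ((1,2),(2,1)),
      ((1,2),(2,3)), ((1,3),(2,1)), ((1,3),(2,2))]"

definition label_classes :: "pauli_label set list" where
  "label_classes = map (\<lambda>(x, y). label_class x y) class_generators"

lemma class_generators_generate: "\<forall>(x, y)\<in>set class_generators. generates_class x y"
  by code_simp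

lemma label_classes_complete:
  "\<forall>x\<in>set nonzero_labels. \<forall>y\<in>set nonzero_labels.
     generates_class x y \<longrightarrow> label_class x y \<in> set label_classes"
  by code_simp

lemma disjoint_label_classes_anticommute:
  "\<forall>C\<in>set label_classes. \<forall>C'\<in>set label_classes.
     C \<inter> C' = {} \<longrightarrow> (\<forall>r\<in>C'. \<exists>p\<in>C. \<not> labels_commute p r)"
  by code_simp

lemma third_label_class:
  "\<forall>C1\<in>set label_classes. \<forall>C2\<in>set label_classes. C1 \<inter> C2 = {} \<longrightarrow>
     (\<exists>C3\<in>set label_classes. C3 \<inter> C1 = {} \<and> C3 \<inter> C2 = {} \<and>
        (\<forall>C\<in>set label_classes. C \<inter> C1 \<noteq> {} \<or> C \<inter> C2 \<noteq> {} \<or> C \<inter> C3 \<noteq> {}))"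
  by code_simp

lemma label_class_in_label_classes:
  "generates_class x y \<Longrightarrow> label_class x y \<in> set label_classes"
  using label_classes_complete by (simp add: generates_class_def)

lemma label_classesE:
  assumes "C \<in> set label_classes"
  obtains x y where "generates_class x y" "C = label_class x y"
  using assms class_generators_generate by (auto simp: label_classes_def)

section \<open>Mutually unbiased eigenbases\<close>

lemma common_eigenbasis_vector:
  assumes "common_eigenbasis C B" "b \<in> B"
  shows "b \<in> carrier_vec 4" "cinner4 b b = 1" "b \<noteq> 0\<^sub>v 4"
proof -
  show "b \<in> carrier_vec 4" "cinner4 b b = 1"
    using assms by (auto simp: common_eigenbasis_def orthonormal_basis4_def)
  then show "b \<noteq> 0\<^sub>v 4"
    by (auto simp: cinner4_def)
qed

lemma common_eigenbasis_pauli_eigenvalue: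
  assumes "common_eigenbasis C B" "b \<in> B" "pauli_op z \<in> C" "is_label z"
  obtains e where "pauli_op z *\<^sub>v b = e \<cdot>\<^sub>v b" "e = 1 \<or> e = -1"
proof -
  obtain e where e: "pauli_op z *\<^sub>v b = e \<cdot>\<^sub>v b"
    using assms(1-3) by (auto simp: common_eigenbasis_def)
  moreover have "e = 1 \<or> e = -1"
    using involution_eigenvalue[OF _ pauli_op_square[OF assms(4)] common_eigenbasis_vector(1,3)[OF assms(1,2)] e]
    by simp
  ultimately show ?thesis
    using that by blast
qed

lemma common_element_not_unbiased:
  assumes "P \<in> nonid_paulis" "P \<in> C" "P \<in> C'"
    and B: "common_eigenbasis C B" and B': "common_eigenbasis C' B'"
  shows "\<not> unbiased B B'"
proof
  assume unbiased: "unbiased B B'"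
  obtain z where z: "is_label z" "z \<noteq> (0, 0)" "P = pauli_op z"
    using assms(1) by (auto simp: nonid_paulis_iff set_nonzero_labels)
  obtain b where "b \<in> B"
    using B by (fastforce simp: common_eigenbasis_def orthonormal_basis4_def)
  then obtain e where e: "P *\<^sub>v b = e \<cdot>\<^sub>v b" "e = 1 \<or> e = -1"
    using common_eigenbasis_pauli_eigenvalue[OF B _ _ z(1)] assms(2) z(3) by metis
  have "P *\<^sub>v b' = e \<cdot>\<^sub>v b'" if b': "b' \<in> B'" for b'
  proof -
    obtain e' where e': "P *\<^sub>v b' = e' \<cdot>\<^sub>v b'" "e' = 1 \<or> e' = -1"
      using common_eigenbasis_pauli_eigenvalue[OF B' b' _ z(1)] assms(3) z(3) by metis
    have "cmod (cinner4 b b') = 1 / sqrt 4"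
      using unbiased \<open>b \<in> B\<close> b' by (simp add: unbiased_def)
    then have "cinner4 b b' \<noteq> 0"
      by auto
    then have "e' = e"
      using hermitian4_eigenvectors_orthogonal[OF hermitian4_pauli_op[OF z(1)]
          common_eigenbasis_vector(1)[OF B \<open>b \<in> B\<close>] common_eigenbasis_vector(1)[OF B' b']]
        e e' z(3) by fastforce
    with e' show ?thesis
      by simp
  qed
  moreover obtain f where f: "orthonormal_family4 f" "f ` {..<4} = B'"
    using B' orthonormal_basis4_enumeration by (auto simp: common_eigenbasis_def)
  ultimately have "P = e \<cdot>\<^sub>m 1\<^sub>m 4"
    using scalar_on_orthonormal_family[OF f(1)] z(3) by auto
  then have "mat_trace P = 4 * e"
    by (simp add: mat_trace_smult[of _ 4] mat_trace_one)
  then show False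
    using z e(2) by (auto simp: mat_trace_pauli_op)
qed

definition translate_label :: "pauli_label \<Rightarrow> pauli_label \<Rightarrow> nat \<Rightarrow> pauli_label" where
  "translate_label u v k = [(0, 0), u, v, label_mult u v] ! k"

lemma translate_label_0 [simp]: "translate_label u v 0 = (0, 0)"
  by (simp add: translate_label_def)

lemma is_label_translate_label:
  assumes "generates_class u v" "k < 4"
  shows "is_label (translate_label u v k)"
proof -
  have "is_label u" "is_label v"
    using assms(1) by (simp_all add: generates_class_def set_nonzero_labels)
  then show ?thesis
    using assms(2) is_label_mult[of u v] unfolding nat_less_4_iff
    by (auto simp: translate_label_def is_label_def)
qed

lemma translate_label_in_label_class:
  "k < 4 \<Longrightarrow> k \<noteq> 0 \<Longrightarrow> translate_label u v k \<in> label_class u v"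
  unfolding nat_less_4_iff by (auto simp: translate_label_def label_class_def)

lemma translate_label_mult:
  assumes "k < 4" "l < 4" "k \<noteq> l"
  shows "label_mult (translate_label u v k) (translate_label u v l) \<in> label_class u v"
proof -
  have "label_mult u (label_mult u v) = v" "label_mult (label_mult u v) u = v"
    "label_mult v (label_mult u v) = u" "label_mult (label_mult u v) v = u"
    "label_mult v u = label_mult u v"
    by (metis label_mult_commute label_mult_left_self)+
  then show ?thesis
    using assms unfolding nat_less_4_iff
    by (auto simp: translate_label_def label_class_def label_mult_0_left label_mult_0_right)
qed

lemma disjoint_classes_anticommute:
  assumes "generates_class x y" "generates_class u v" "label_class x y \<inter> label_class u v = {}"
    and "r \<in> label_class u v"
  obtains p where "p \<in> label_class x y" "\<not> labels_commute p r"
proof -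
  have "label_class x y \<in> set label_classes" "label_class u v \<in> set label_classes"
    using assms(1,2) by (simp_all add: label_class_in_label_classes)
  then show ?thesis
    using bspec[OF bspec[OF disjoint_label_classes_anticommute]] assms(3,4) that by blast
qed

text \<open>
  A product of two translating operators is, up to a phase, an element r of {u, v, uv}; some
  element of the class of b anticommutes with r, so the expectation of r in b vanishes.
\<close>

lemma pauli_translates_orthonormal:
  assumes xy: "generates_class x y" and uv: "generates_class u v"
    and disjoint: "label_class x y \<inter> label_class u v = {}"
    and b: "b \<in> carrier_vec 4" "cinner4 b b = 1"
    and eigen: "\<And>p. p \<in> label_class x y \<Longrightarrow> \<exists>e. pauli_op p *\<^sub>v b = e \<cdot>\<^sub>v b"
  shows "orthonormal_family4 (\<lambda>k. pauli_op (translate_label u v k) *\<^sub>v b)"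
  unfolding orthonormal_family4_def
proof (intro conjI allI impI)
  fix k l :: nat assume kl: "k < 4" "l < 4"
  let ?p = "translate_label u v k" and ?q = "translate_label u v l"
  have labels: "is_label ?p" "is_label ?q"
    using is_label_translate_label[OF uv] kl by simp_all
  have "cinner4 (pauli_op ?p *\<^sub>v b) (pauli_op ?q *\<^sub>v b) = cinner4 b ((pauli_op ?p * pauli_op ?q) *\<^sub>v b)"
    using hermitian4_cinner4[OF hermitian4_pauli_op[OF labels(1)] b(1), of "pauli_op ?q *\<^sub>v b"] b(1)
    by (simp add: assoc_mult_mat_vec[of _ 4 4 _ 4])
  also have "\<dots> = (if k = l then 1 else 0)"
  proof (cases "k = l")
    case False
    let ?r = "label_mult ?p ?q"
    have r: "?r \<in> label_class u v"
      using translate_label_mult[OF kl False] .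
    obtain p where p: "p \<in> label_class x y" "\<not> labels_commute p ?r"
      using disjoint_classes_anticommute[OF xy uv disjoint r] .
    obtain e where "pauli_op p *\<^sub>v b = e \<cdot>\<^sub>v b"
      using eigen[OF p(1)] by blast
    then have "cinner4 b (pauli_op ?r *\<^sub>v b) = 0"
      using pauli_expectation_eq_0 generates_class_label_class(1) xy uv p r b by blast
    moreover have "(pauli_op ?p * pauli_op ?q) *\<^sub>v b = label_phase ?p ?q \<cdot>\<^sub>v (pauli_op ?r *\<^sub>v b)"
      unfolding pauli_op_mult[OF labels] by (rule smult_mat_mult_vec[OF pauli_op_carrier b(1)])
    ultimately show ?thesis
      using False b(1) by (simp add: cinner4_smult_right)
  qed (use b pauli_op_square[OF labels(1)] in simp)
  finally show "cinner4 (pauli_op ?p *\<^sub>v b) (pauli_op ?q *\<^sub>v b) = (if k = l then 1 else 0)" .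
qed (simp add: b)

lemma disjoint_classes_unbiased:
  assumes xy: "generates_class x y" and uv: "generates_class u v"
    and disjoint: "label_class x y \<inter> label_class u v = {}"
    and B: "common_eigenbasis (pauli_class x y) B" and B': "common_eigenbasis (pauli_class u v) B'"
  shows "unbiased B B'"
proof -
  have "cmod (cinner4 b b') = 1 / 2" if b: "b \<in> B" and b': "b' \<in> B'" for b b'
  proof -
    note vb = common_eigenbasis_vector[OF B b] and vb' = common_eigenbasis_vector[OF B' b']
    define f where "f k = pauli_op (translate_label u v k) *\<^sub>v b" for k
    have "orthonormal_family4 f"
      unfolding f_def using B b vb
      by (intro pauli_translates_orthonormal[OF xy uv disjoint]) (auto simp: common_eigenbasis_def pauli_class_def)
    moreover have "cmod (cinner4 (f k) b') = cmod (cinner4 b b')" if "k < 4" for k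
    proof -
      have label: "is_label (translate_label u v k)"
        using is_label_translate_label[OF uv that] .
      obtain \<mu> where \<mu>: "pauli_op (translate_label u v k) *\<^sub>v b' = \<mu> \<cdot>\<^sub>v b'" "\<mu> = 1 \<or> \<mu> = -1"
      proof (cases "k = 0")
        case True
        then show ?thesis
          using that[of 1] vb'(1) by (simp add: pauli_op_0)
      next
        case False
        then have "pauli_op (translate_label u v k) \<in> pauli_class u v"
          using translate_label_in_label_class[OF \<open>k < 4\<close>] by (simp add: pauli_class_def)
        then show ?thesis
          using common_eigenbasis_pauli_eigenvalue[OF B' b' _ label] that by blast
      qed
      have "cinner4 (f k) b' = \<mu> * cinner4 b b'"
        unfolding f_def using vb(1) vb'(1)
        by (simp add: hermitian4_cinner4[OF hermitian4_pauli_op[OF label], symmetric] \<mu>(1)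
            cinner4_smult_right)
      then show ?thesis
        using \<mu>(2) by (auto simp: norm_mult)
    qed
    ultimately show ?thesis
      using orthonormal_family4_equal_moduli vb'(1,2) by blast
  qed
  moreover have "sqrt 4 = 2"
    by (simp add: real_sqrt_unique)
  ultimately show ?thesis
    using B B' by (simp add: unbiased_def common_eigenbasis_def)
qed

lemma max_comm_class_common_eigenbasis: "max_comm_class C \<Longrightarrow> \<exists>B. common_eigenbasis C B"
  by (elim max_comm_class_pauli_class) (simp add: common_eigenbasis_exists)

lemma disjoint_max_comm_classes_unbiased:
  assumes "max_comm_class C" "max_comm_class C'" "C \<inter> C' = {}"
    and "common_eigenbasis C B" "common_eigenbasis C' B'"
  shows "unbiased B B'"
proof -
  obtain x y where xy: "generates_class x y" "C = pauli_class x y"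
    using assms(1) by (rule max_comm_class_pauli_class)
  obtain u v where uv: "generates_class u v" "C' = pauli_class u v"
    using assms(2) by (rule max_comm_class_pauli_class)
  show ?thesis
    using disjoint_classes_unbiased[OF xy(1) uv(1)] assms(3-5) pauli_class_disjoint_iff[OF xy(1) uv(1)]
    by (simp add: xy(2) uv(2))
qed

lemma third_max_comm_class:
  assumes "max_comm_class C1" "max_comm_class C2" "C1 \<inter> C2 = {}"
  obtains C3 where "max_comm_class C3" "C3 \<inter> C1 = {}" "C3 \<inter> C2 = {}"
    "\<And>C. max_comm_class C \<Longrightarrow> C \<inter> C1 \<noteq> {} \<or> C \<inter> C2 \<noteq> {} \<or> C \<inter> C3 \<noteq> {}"
proof -
  obtain x1 y1 where 1: "generates_class x1 y1" "C1 = pauli_class x1 y1"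
    using assms(1) by (rule max_comm_class_pauli_class)
  obtain x2 y2 where 2: "generates_class x2 y2" "C2 = pauli_class x2 y2"
    using assms(2) by (rule max_comm_class_pauli_class)
  let ?L1 = "label_class x1 y1" and ?L2 = "label_class x2 y2"
  have "?L1 \<inter> ?L2 = {}"
    using assms(3) pauli_class_disjoint_iff[OF 1(1) 2(1)] by (simp add: 1(2) 2(2))
  then have "\<exists>L3\<in>set label_classes. L3 \<inter> ?L1 = {} \<and> L3 \<inter> ?L2 = {} \<and>
      (\<forall>L\<in>set label_classes. L \<inter> ?L1 \<noteq> {} \<or> L \<inter> ?L2 \<noteq> {} \<or> L \<inter> L3 \<noteq> {})"
    by (rule mp[OF bspec[OF bspec[OF third_label_class label_class_in_label_classes[OF 1(1)]]
          label_class_in_label_classes[OF 2(1)]]])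
  then obtain L3 where L3: "L3 \<in> set label_classes" "L3 \<inter> ?L1 = {}" "L3 \<inter> ?L2 = {}"
    and meets: "\<forall>L\<in>set label_classes. L \<inter> ?L1 \<noteq> {} \<or> L \<inter> ?L2 \<noteq> {} \<or> L \<inter> L3 \<noteq> {}"
    by blast
  obtain x3 y3 where 3: "generates_class x3 y3" "L3 = label_class x3 y3"
    using L3(1) by (rule label_classesE)
  show ?thesis
  proof (rule that[of "pauli_class x3 y3"])
    show "max_comm_class (pauli_class x3 y3)"
      using 3(1) by (rule pauli_class_max_comm_class)
    show "pauli_class x3 y3 \<inter> C1 = {}" "pauli_class x3 y3 \<inter> C2 = {}"
      using L3(2,3) pauli_class_disjoint_iff[OF 3(1) 1(1)] pauli_class_disjoint_iff[OF 3(1) 2(1)]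
      by (simp_all add: 1(2) 2(2) 3(2))
    fix C assume "max_comm_class C"
    then obtain x y where xy: "generates_class x y" "C = pauli_class x y"
      by (rule max_comm_class_pauli_class)
    then have "label_class x y \<inter> ?L1 \<noteq> {} \<or> label_class x y \<inter> ?L2 \<noteq> {} \<or> label_class x y \<inter> L3 \<noteq> {}"
      using bspec[OF meets label_class_in_label_classes] by blast
    then show "C \<inter> C1 \<noteq> {} \<or> C \<inter> C2 \<noteq> {} \<or> C \<inter> pauli_class x3 y3 \<noteq> {}"
      using pauli_class_disjoint_iff[OF xy(1) 1(1)] pauli_class_disjoint_iff[OF xy(1) 2(1)]
        pauli_class_disjoint_iff[OF xy(1) 3(1)]
      by (simp add: xy(2) 1(2) 2(2) 3(2))
  qed
qed

lemma weakly_unextendible_pauli_mubsI: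
  assumes classes: "\<forall>C\<in>set Cs. max_comm_class C"
    and disjoint: "\<forall>i<length Cs. \<forall>j<length Cs. i \<noteq> j \<longrightarrow> Cs ! i \<inter> Cs ! j = {}"
    and maximal: "\<forall>C. max_comm_class C \<longrightarrow> (\<exists>C'\<in>set Cs. C \<inter> C' \<noteq> {})"
  shows "weakly_unextendible_pauli_mubs Cs"
  unfolding weakly_unextendible_pauli_mubs_def
proof (intro conjI allI impI)
  show "\<exists>Bs. length Bs = length Cs \<and> (\<forall>i<length Cs. common_eigenbasis (Cs ! i) (Bs ! i))"
    using classes max_comm_class_common_eigenbasis
    by (intro exI[of _ "map (\<lambda>C. SOME B. common_eigenbasis C B) Cs"]) (auto intro: someI_ex)
next
  fix Bs assume "length Bs = length Cs \<and> (\<forall>i<length Cs. common_eigenbasis (Cs ! i) (Bs ! i))"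
  then have Bs: "\<And>i. i < length Cs \<Longrightarrow> common_eigenbasis (Cs ! i) (Bs ! i)"
    by blast
  show "unbiased (Bs ! i) (Bs ! j)" if "i < length Cs" "j < length Cs" "i \<noteq> j" for i j
    using that classes disjoint Bs by (intro disjoint_max_comm_classes_unbiased[of "Cs ! i" "Cs ! j"]) auto
  show "\<not> (\<exists>C B. max_comm_class C \<and> common_eigenbasis C B \<and> (\<forall>i<length Cs. unbiased B (Bs ! i)))"
  proof
    assume "\<exists>C B. max_comm_class C \<and> common_eigenbasis C B \<and> (\<forall>i<length Cs. unbiased B (Bs ! i))"
    then obtain C B where C: "max_comm_class C" "common_eigenbasis C B"
      and unbiased: "\<forall>i<length Cs. unbiased B (Bs ! i)"
      by blast
    obtain C' where "C' \<in> set Cs" "C \<inter> C' \<noteq> {}"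
      using maximal C(1) by blast
    then obtain i P where i: "i < length Cs" "P \<in> C" "P \<in> Cs ! i"
      by (auto simp: in_set_conv_nth)
    moreover have "P \<in> nonid_paulis"
      using C(1) i(2) by (auto simp: max_comm_class_def)
    ultimately show False
      using common_element_not_unbiased[OF _ _ _ C(2) Bs] unbiased by blast
  qed
qed

theorem corollary1:
  assumes "max_comm_class C1" and "max_comm_class C2" and "C1 \<inter> C2 = {}"
  shows "\<exists>C3. max_comm_class C3 \<and> C3 \<inter> C1 = {} \<and> C3 \<inter> C2 = {} \<and>
           weakly_unextendible_pauli_mubs [C1, C2, C3]"
proof -
  obtain C3 where C3: "max_comm_class C3" "C3 \<inter> C1 = {}" "C3 \<inter> C2 = {}"
    and maximal: "\<And>C. max_comm_class C \<Longrightarrow> C \<inter> C1 \<noteq> {} \<or> C \<inter> C2 \<noteq> {} \<or> C \<inter> C3 \<noteq> {}"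
    using third_max_comm_class[OF assms] by blast
  have "weakly_unextendible_pauli_mubs [C1, C2, C3]"
  proof (rule weakly_unextendible_pauli_mubsI)
    show "\<forall>C\<in>set [C1, C2, C3]. max_comm_class C"
      using assms C3 by simp
    show "\<forall>i<length [C1, C2, C3]. \<forall>j<length [C1, C2, C3]. i \<noteq> j \<longrightarrow>
        [C1, C2, C3] ! i \<inter> [C1, C2, C3] ! j = {}"
      using assms(3) C3(2,3) by (auto simp: less_Suc_eq numeral_eq_Suc Int_commute)
    show "\<forall>C. max_comm_class C \<longrightarrow> (\<exists>C'\<in>set [C1, C2, C3]. C \<inter> C' \<noteq> {})"
      using maximal by auto
  qed
  with C3 show ?thesis
    by blast
qed

end
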